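(* Let $\mathcal{X}' := \mathcal{X}\times\mathcal{X}^{|\mathcal{N}|}$, let $\Phi:\mathcal{X}'\to\mathcal{R}$ be a one-to-one (invertible) representation function with inverse $\Psi:\mathcal{R}\to\mathcal{X}'$, and write $r=\Phi(\mathbf{x})$. Let $h:\mathcal{R}\times\{0,1\}\times[0,1]\to\mathcal{Y}$ be a hypothesis and $L:\mathcal{Y}\times\mathcal{Y}\to\mathbb{R}_+$ a loss function. Let $w_\eta$ be a weight function and $q_\eta(\mathbf{x}\mid t,z)$ the associated reweighted distribution (see context). Let $G$ be a family of real-valued functions on $\mathcal{R}\times\{0,1\}\times[0,1]$, and assume there is a constant $B_\Phi>0$ such that the function $(r,t,z)\mapsto \frac{1}{B_\Phi}\,\ell_{h,\Phi}(\Psi(r),t,z)$ belongs to $G$. Then $$\epsilon_{CF}\le \epsilon_F^{\eta}+B_\Phi\cdot \mathrm{IPM}_G\big(p_\Phi(r)\,p(t,z),\; q_{\Phi,\eta}(r\mid t,z)\,p(t,z)\big),$$ where $p_\Phi(r)$ and $q_{\Phi,\eta}(r\mid t,z)$ are the distributions of $r=\Phi(\mathbf{x})$ when $\mathbf{x}\sim p(\mathbf{x})$ and $\mathbf{x}\sim q_\eta(\mathbf{x}\mid t,z)$, respectively.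
   Context: Setting: each unit has a combined feature vector $\mathbf{x}\in\mathcal{X}'=\mathcal{X}\times\mathcal{X}^{|\mathcal{N}|}$ (its own features and its neighbours' features), a binary individual treatment $t\in\{0,1\}$ and a neighbourhood exposure $z\in[0,1]$. There is a joint distribution of $(\mathbf{x},t,z)$ with marginals $p(\mathbf{x})$, $p(t,z)$ and conditionals $p(\mathbf{x}\mid t,z)$. For each $(t,z)$ there is a potential outcome $y(t,z)\in\mathcal{Y}$ with conditional density $p(y(t,z)\mid\mathbf{x})$. Per-unit expected loss: $\ell_{h,\Phi}(\mathbf{x},t,z)=\int_{\mathcal{Y}} L\big(y(t,z),h(\Phi(\mathbf{x}),t,z)\big)\,p(y(t,z)\mid\mathbf{x})\,dy(t,z)$. Factual loss: $\epsilon_F=\mathbb{E}_{p(t,z)}\big[\int \ell_{h,\Phi}(\mathbf{x},t,z)\,p(\mathbf{x}\mid t,z)\,d\mathbf{x}\big]$. Counterfactual loss: $\epsilon_{CF}=\mathbb{E}_{p(t,z)}\Big[\mathbb{E}_{p(t',z')}\big[\int \ell_{h,\Phi}(\mathbf{x},t,z)\,p(\mathbf{x}\mid t',z')\,d\mathbf{x}\big]\Big]$, where $(t',z')$ is an independent copy with distribution $p(t,z)$. Weights: $w_\eta:\{0,1\}\times[0,1]\times\mathcal{X}'\to(0,\infty)$ is a weight function such that for every $(t,z)$ the normalizer $c(t,z)=\int w_\eta(t,z,\mathbf{x})p(\mathbf{x}\mid t,z)d\mathbf{x}$ is finite and positive; the reweighted distribution is $q_\eta(\mathbf{x}\mid t,z)=w_\eta(t,z,\mathbf{x})p(\mathbf{x}\mid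 t,z)/c(t,z)$. Reweighted factual loss: $\epsilon_F^{\eta}=\mathbb{E}_{p(t,z)}\big[\int \ell_{h,\Phi}(\mathbf{x},t,z)\,q_\eta(\mathbf{x}\mid t,z)\,d\mathbf{x}\big]$. Integral probability metric: for distributions $P,Q$ on $\mathcal{R}\times\{0,1\}\times[0,1]$, $\mathrm{IPM}_G(P,Q)=\sup_{g\in G}\left|\int g\,dP-\int g\,dQ\right|$; here $p_\Phi(r)p(t,z)$ is the product distribution and $q_{\Phi,\eta}(r\mid t,z)p(t,z)$ is the joint distribution with $(t,z)\sim p(t,z)$ and then $r\sim q_{\Phi,\eta}(\cdot\mid t,z)$. *)

theory Defs
  imports "HOL-Probability.Probability"
begin

text \<open>Measurable space of (individual treatment, neighbourhood exposure):
  t \<in> {0,1}, z \<in> [0,1].\<close>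
definition TZ :: "(nat \<times> real) measure" where
  "TZ = count_space {0, 1} \<Otimes>\<^sub>M restrict_space borel {0..1}"

definition exp_loss ::
  "('y \<Rightarrow> 'y \<Rightarrow> real) \<Rightarrow> ('r \<Rightarrow> nat \<Rightarrow> real \<Rightarrow> 'y) \<Rightarrow> ('x \<Rightarrow> 'r)
   \<Rightarrow> ('x \<Rightarrow> nat \<times> real \<Rightarrow> 'y measure) \<Rightarrow> 'x \<Rightarrow> nat \<Rightarrow> real \<Rightarrow> real" where
  "exp_loss L h \<Phi> PY x t z = (\<integral>y. L y (h (\<Phi> x) t z) \<partial>(PY x (t, z)))"

definition factual_loss ::
  "((nat \<times> real) measure) \<Rightarrow> (nat \<times> real \<Rightarrow> 'x measure) \<Rightarrow> ('x \<Rightarrow> nat \<Rightarrow> real \<Rightarrow> real) \<Rightarrow> real" where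
  "factual_loss PTZ K l = (\<integral>tz. (\<integral>x. l x (fst tz) (snd tz) \<partial>(K tz)) \<partial>PTZ)"

definition counterfactual_loss ::
  "((nat \<times> real) measure) \<Rightarrow> (nat \<times> real \<Rightarrow> 'x measure) \<Rightarrow> ('x \<Rightarrow> nat \<Rightarrow> real \<Rightarrow> real) \<Rightarrow> real" where
  "counterfactual_loss PTZ K l =
     (\<integral>tz. (\<integral>tz'. (\<integral>x. l x (fst tz) (snd tz) \<partial>(K tz')) \<partial>PTZ) \<partial>PTZ)"

definition weight_normalizer ::
  "(nat \<times> real \<Rightarrow> 'x measure) \<Rightarrow> (nat \<times> real \<Rightarrow> 'x \<Rightarrow> real) \<Rightarrow> nat \<times> real \<Rightarrow> real" where
  "weight_normalizer K w tz = (\<integral>x. w tz x \<partial>(K tz))"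

definition reweighted ::
  "(nat \<times> real \<Rightarrow> 'x measure) \<Rightarrow> (nat \<times> real \<Rightarrow> 'x \<Rightarrow> real) \<Rightarrow> nat \<times> real \<Rightarrow> 'x measure" where
  "reweighted K w tz = density (K tz) (\<lambda>x. ennreal (w tz x / weight_normalizer K w tz))"

text \<open>Integral probability metric (valued in the extended reals, since the
  supremum may be infinite).\<close>
definition IPM :: "('a \<Rightarrow> real) set \<Rightarrow> 'a measure \<Rightarrow> 'a measure \<Rightarrow> ereal" where
  "IPM G P Q = (SUP g\<in>G. ereal \<bar>(\<integral>v. g v \<partial>P) - (\<integral>v. g v \<partial>Q)\<bar>)"

definition rep_product ::
  "'r measure \<Rightarrow> ((nat \<times> real) measure) \<Rightarrow> (nat \<times> real \<Rightarrow> 'x measure) \<Rightarrow> ('x \<Rightarrow> 'r)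
   \<Rightarrow> ('r \<times> (nat \<times> real)) measure" where
  "rep_product R PTZ K \<Phi> = distr (PTZ \<bind> K) R \<Phi> \<Otimes>\<^sub>M PTZ"

definition rep_reweighted_joint ::
  "'r measure \<Rightarrow> ((nat \<times> real) measure) \<Rightarrow> (nat \<times> real \<Rightarrow> 'x measure)
   \<Rightarrow> (nat \<times> real \<Rightarrow> 'x \<Rightarrow> real) \<Rightarrow> ('x \<Rightarrow> 'r) \<Rightarrow> ('r \<times> (nat \<times> real)) measure" where
  "rep_reweighted_joint R PTZ K w \<Phi> =
     PTZ \<bind> (\<lambda>tz. distr (reweighted K w tz) (R \<Otimes>\<^sub>M TZ) (\<lambda>x. (\<Phi> x, tz)))"

end

(* Write f(r, t, z) = l(Psi r, t, z). Since Psi inverts Phi, the counterfactual loss is the expectation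
   of f under p_Phi(r) p(t, z) and the reweighted factual loss is its expectation under
   q_{Phi,eta}(r | t, z) p(t, z). The difference of these expectations is B times the difference of the
   expectations of f / B, a member of G, hence at most B * IPM_G. The integrals involved are Bochner
   integrals, which are computed through the nonnegative integrals of f. *)

theory Submission
  imports Defs
begin

lemma integral_measurable_subprob_algebra2:
  fixes f :: "'a \<Rightarrow> 'b \<Rightarrow> 'c::{banach, second_countable_topology}"
  assumes f[measurable]: "(\<lambda>(x, y). f x y) \<in> borel_measurable (M \<Otimes>\<^sub>M N)"
    and L[measurable]: "L \<in> measurable M (subprob_algebra N)"
  shows "(\<lambda>x. integral\<^sup>L (L x) (f x)) \<in> borel_measurable M"
proof -
  note measurable_distr2[measurable]
  have "(\<lambda>x. integral\<^sup>L (distr (L x) (M \<Otimes>\<^sub>M N) (\<lambda>y. (x, y))) (\<lambda>(x, y). f x y)) \<in> borel_measurable M"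
    by measurable
  then show ?thesis
    by (rule measurable_cong[THEN iffD1, rotated]) (simp add: integral_distr)
qed

(* Inner integrals of a nested Bochner integral can be infinite (and then evaluate to 0) on a null set,
   which is why equality is only required almost everywhere. *)
lemma integral_eq_enn2real_nn_integral_AE:
  fixes g :: "'a \<Rightarrow> real"
  assumes G: "G \<in> borel_measurable M" and fin: "(\<integral>\<^sup>+x. G x \<partial>M) \<noteq> \<infinity>"
    and g: "g \<in> borel_measurable M" and eq: "AE x in M. g x = enn2real (G x)"
  shows "integral\<^sup>L M g = enn2real (\<integral>\<^sup>+x. G x \<partial>M)"
proof -
  have "integral\<^sup>L M g = (\<integral>x. enn2real (G x) \<partial>M)"
    using G g eq by (intro integral_cong_AE) auto
  also have "\<dots> = enn2real (\<integral>\<^sup>+x. ennreal (enn2real (G x)) \<partial>M)"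
    using G by (intro integral_eq_nn_integral) auto
  also have "(\<integral>\<^sup>+x. ennreal (enn2real (G x)) \<partial>M) = (\<integral>\<^sup>+x. G x \<partial>M)"
    using nn_integral_PInf_AE[OF G fin] by (intro nn_integral_cong_AE) (auto simp: less_top)
  finally show ?thesis .
qed

lemma integral_kernel_eq_enn2real_nn_integral:
  fixes f :: "'a \<Rightarrow> 'b \<Rightarrow> real"
  assumes f[measurable]: "(\<lambda>(x, y). f x y) \<in> borel_measurable (M \<Otimes>\<^sub>M N)"
    and nonneg: "\<And>x y. 0 \<le> f x y"
    and L[measurable]: "L \<in> measurable M (subprob_algebra N)"
    and fin: "(\<integral>\<^sup>+x. \<integral>\<^sup>+y. f x y \<partial>L x \<partial>M) \<noteq> \<infinity>"
  shows "(\<integral>x. \<integral>y. f x y \<partial>L x \<partial>M) = enn2real (\<integral>\<^sup>+x. \<integral>\<^sup>+y. f x y \<partial>L x \<partial>M)"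
proof (rule integral_eq_enn2real_nn_integral_AE[OF _ fin])
  show "(\<lambda>x. \<integral>\<^sup>+y. f x y \<partial>L x) \<in> borel_measurable M"
    by (rule nn_integral_measurable_subprob_algebra2[OF _ L]) measurable
  show "(\<lambda>x. \<integral>y. f x y \<partial>L x) \<in> borel_measurable M"
    by (rule integral_measurable_subprob_algebra2[OF f L])
  show "AE x in M. (\<integral>y. f x y \<partial>L x) = enn2real (\<integral>\<^sup>+y. f x y \<partial>L x)"
  proof (rule AE_I2)
    fix x assume x: "x \<in> space M"
    have "f x \<in> borel_measurable (L x)"
      using measurable_Pair2[OF f x] by (simp add: sets_kernel[OF L x] cong: measurable_cong_sets)
    then show "(\<integral>y. f x y \<partial>L x) = enn2real (\<integral>\<^sup>+y. f x y \<partial>L x)"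
      by (rule integral_eq_nn_integral) (simp add: nonneg)
  qed
qed

lemma integral_le_integral_add_IPM:
  fixes f :: "'a \<Rightarrow> real"
  assumes B: "0 < B" and fG: "(\<lambda>v. f v / B) \<in> G"
  shows "ereal (\<integral>v. f v \<partial>P) \<le> ereal (\<integral>v. f v \<partial>Q) + ereal B * IPM G P Q"
proof -
  have "ereal (\<bar>(\<integral>v. f v \<partial>P) - (\<integral>v. f v \<partial>Q)\<bar> / B) \<le> IPM G P Q"
    unfolding IPM_def using B by (intro SUP_upper2[OF fG]) (simp add: diff_divide_distrib[symmetric])
  then have "ereal B * ereal (\<bar>(\<integral>v. f v \<partial>P) - (\<integral>v. f v \<partial>Q)\<bar> / B) \<le> ereal B * IPM G P Q"
    using B by (intro ereal_mult_left_mono) auto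
  then have "ereal \<bar>(\<integral>v. f v \<partial>P) - (\<integral>v. f v \<partial>Q)\<bar> \<le> ereal B * IPM G P Q"
    using B by simp
  then have "ereal (\<integral>v. f v \<partial>Q) + ereal \<bar>(\<integral>v. f v \<partial>P) - (\<integral>v. f v \<partial>Q)\<bar>
      \<le> ereal (\<integral>v. f v \<partial>Q) + ereal B * IPM G P Q"
    by (rule add_left_mono)
  moreover have "ereal (\<integral>v. f v \<partial>P)
      \<le> ereal (\<integral>v. f v \<partial>Q) + ereal \<bar>(\<integral>v. f v \<partial>P) - (\<integral>v. f v \<partial>Q)\<bar>"
    by simp
  ultimately show ?thesis
    by (rule order_trans[rotated])
qed

lemma weight_normalizer_pos:
  assumes "prob_space (K t)" and "integrable (K t) (w t)" and "\<And>x. 0 < w t x"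
  shows "0 < weight_normalizer K w t"
proof -
  interpret prob_space "K t" by fact
  have "(\<integral>x. 0 \<partial>K t) < (\<integral>x. w t x \<partial>K t)"
    using assms by (intro integral_less_AE_space) (auto simp: emeasure_space_1)
  then show ?thesis by (simp add: weight_normalizer_def)
qed

lemma borel_measurable_weight_normalizer:
  assumes K: "K \<in> measurable T (subprob_algebra X)"
    and w: "(\<lambda>(t, x). w t x) \<in> borel_measurable (T \<Otimes>\<^sub>M X)"
  shows "weight_normalizer K w \<in> borel_measurable T"
  unfolding weight_normalizer_def by (rule integral_measurable_subprob_algebra2[OF w K])

lemma prob_space_reweighted:
  assumes "prob_space (K t)" and w_int: "integrable (K t) (w t)" and w_pos: "\<And>x. 0 < w t x"
    and w: "w t \<in> borel_measurable (K t)"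
  shows "prob_space (reweighted K w t)"
proof (rule prob_spaceI)
  have c_pos: "0 < weight_normalizer K w t"
    using assms(1) w_int w_pos by (rule weight_normalizer_pos)
  have "emeasure (reweighted K w t) (space (reweighted K w t))
      = (\<integral>\<^sup>+x. ennreal (w t x / weight_normalizer K w t) \<partial>K t)"
    unfolding reweighted_def using w by (simp add: emeasure_density)
  also have "\<dots> = ennreal (\<integral>x. w t x / weight_normalizer K w t \<partial>K t)"
    using w_int c_pos w_pos by (intro nn_integral_eq_integral AE_I2) (auto intro: less_imp_le)
  also have "\<dots> = 1"
    using c_pos by (simp add: weight_normalizer_def)
  finally show "emeasure (reweighted K w t) (space (reweighted K w t)) = 1" .
qed

lemma measurable_reweighted:
  assumes K: "K \<in> measurable T (subprob_algebra X)"
    and K_prob: "\<And>t. t \<in> space T \<Longrightarrow> prob_space (K t)"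
    and w[measurable]: "(\<lambda>(t, x). w t x) \<in> borel_measurable (T \<Otimes>\<^sub>M X)"
    and w_pos: "\<And>t x. 0 < w t x"
    and w_int: "\<And>t. t \<in> space T \<Longrightarrow> integrable (K t) (w t)"
  shows "reweighted K w \<in> measurable T (subprob_algebra X)"
proof (rule measurable_subprob_algebra)
  fix t assume t: "t \<in> space T"
  have "w t \<in> borel_measurable (K t)"
    using measurable_Pair2[OF w t] by (simp add: sets_kernel[OF K t] cong: measurable_cong_sets)
  with K_prob[OF t] w_int[OF t] w_pos have "prob_space (reweighted K w t)"
    by (rule prob_space_reweighted)
  then show "subprob_space (reweighted K w t)"
    by (rule prob_space_imp_subprob_space)
  show "sets (reweighted K w t) = sets X"
    by (simp add: reweighted_def sets_kernel[OF K t])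
next
  fix A assume A[measurable]: "A \<in> sets X"
  note borel_measurable_weight_normalizer[OF K w, measurable]
  have "(\<lambda>t. \<integral>\<^sup>+x. ennreal (w t x / weight_normalizer K w t) * indicator A x \<partial>K t)
      \<in> borel_measurable T"
    by (rule nn_integral_measurable_subprob_algebra2[OF _ K]) measurable
  then show "(\<lambda>t. emeasure (reweighted K w t) A) \<in> borel_measurable T"
  proof (rule measurable_cong[THEN iffD1, rotated])
    fix t assume t: "t \<in> space T"
    have "(\<lambda>x. ennreal (w t x / weight_normalizer K w t)) \<in> borel_measurable (K t)"
      using measurable_Pair2[OF w t] by (simp add: sets_kernel[OF K t] cong: measurable_cong_sets)
    then show "(\<integral>\<^sup>+x. ennreal (w t x / weight_normalizer K w t) * indicator A x \<partial>K t)
        = emeasure (reweighted K w t) A"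
      unfolding reweighted_def by (rule emeasure_density[symmetric]) (simp add: sets_kernel[OF K t])
  qed
qed

lemma borel_measurable_exp_loss:
  assumes PY: "(\<lambda>(x, t). PY x t) \<in> measurable (X \<Otimes>\<^sub>M T) (subprob_algebra Y)"
    and h: "(\<lambda>(r, t). h r (fst t) (snd t)) \<in> measurable (R \<Otimes>\<^sub>M T) Y"
    and \<Phi>: "\<Phi> \<in> measurable X R"
    and L: "(\<lambda>(y, y'). L y y') \<in> borel_measurable (Y \<Otimes>\<^sub>M Y)"
  shows "(\<lambda>(x, t). exp_loss L h \<Phi> PY x (fst t) (snd t)) \<in> borel_measurable (X \<Otimes>\<^sub>M T)"
proof -
  have "(\<lambda>p. (\<Phi> (fst p), snd p)) \<in> measurable (X \<Otimes>\<^sub>M T) (R \<Otimes>\<^sub>M T)"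
    using \<Phi> by measurable
  from measurable_compose[OF this h]
  have [measurable]: "(\<lambda>p. h (\<Phi> (fst p)) (fst (snd p)) (snd (snd p))) \<in> measurable (X \<Otimes>\<^sub>M T) Y"
    by (simp add: case_prod_beta')
  have "(\<lambda>(p, y). (y, h (\<Phi> (fst p)) (fst (snd p)) (snd (snd p))))
      \<in> measurable ((X \<Otimes>\<^sub>M T) \<Otimes>\<^sub>M Y) (Y \<Otimes>\<^sub>M Y)"
    by measurable
  from measurable_compose[OF this L]
  have "(\<lambda>(p, y). L y (h (\<Phi> (fst p)) (fst (snd p)) (snd (snd p))))
      \<in> borel_measurable ((X \<Otimes>\<^sub>M T) \<Otimes>\<^sub>M Y)"
    by (simp add: case_prod_beta')
  from integral_measurable_subprob_algebra2[OF this PY] show ?thesis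
    by (simp add: exp_loss_def case_prod_beta')
qed

lemma exp_loss_nonneg:
  assumes "\<And>y y'. 0 \<le> L y y'"
  shows "0 \<le> exp_loss L h \<Phi> PY x t z"
  unfolding exp_loss_def using assms by (rule Bochner_Integration.integral_nonneg)

lemma nn_integral_bind_distr_Pair:
  fixes f :: "'r \<times> 't \<Rightarrow> ennreal"
  assumes M: "sets M = sets T"
    and Q: "Q \<in> measurable T (subprob_algebra X)"
    and \<Phi>: "\<Phi> \<in> measurable X R"
    and f: "f \<in> borel_measurable (R \<Otimes>\<^sub>M T)"
  shows "(\<integral>\<^sup>+v. f v \<partial>(M \<bind> (\<lambda>t. distr (Q t) (R \<Otimes>\<^sub>M T) (\<lambda>x. (\<Phi> x, t)))))
    = (\<integral>\<^sup>+t. \<integral>\<^sup>+x. f (\<Phi> x, t) \<partial>Q t \<partial>M)"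
proof -
  note [measurable] = \<Phi> Q f
  have "(\<lambda>t. distr (Q t) (R \<Otimes>\<^sub>M T) (\<lambda>x. (\<Phi> x, t))) \<in> measurable T (subprob_algebra (R \<Otimes>\<^sub>M T))"
    by (rule measurable_distr2[OF _ Q]) measurable
  then have N: "(\<lambda>t. distr (Q t) (R \<Otimes>\<^sub>M T) (\<lambda>x. (\<Phi> x, t))) \<in> measurable M (subprob_algebra (R \<Otimes>\<^sub>M T))"
    by (subst measurable_cong_sets[OF M refl])
  have "(\<integral>\<^sup>+v. f v \<partial>(M \<bind> (\<lambda>t. distr (Q t) (R \<Otimes>\<^sub>M T) (\<lambda>x. (\<Phi> x, t)))))
      = (\<integral>\<^sup>+t. \<integral>\<^sup>+v. f v \<partial>distr (Q t) (R \<Otimes>\<^sub>M T) (\<lambda>x. (\<Phi> x, t)) \<partial>M)"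
    by (rule nn_integral_bind[OF f N])
  also have "\<dots> = (\<integral>\<^sup>+t. \<integral>\<^sup>+x. f (\<Phi> x, t) \<partial>Q t \<partial>M)"
  proof (rule nn_integral_cong)
    fix t assume "t \<in> space M"
    then have t: "t \<in> space T" using sets_eq_imp_space_eq[OF M] by simp
    have "(\<lambda>x. (\<Phi> x, t)) \<in> measurable (Q t) (R \<Otimes>\<^sub>M T)"
      by (subst measurable_cong_sets[OF sets_kernel[OF Q t] refl]) (use t in measurable)
    then show "(\<integral>\<^sup>+v. f v \<partial>distr (Q t) (R \<Otimes>\<^sub>M T) (\<lambda>x. (\<Phi> x, t))) = (\<integral>\<^sup>+x. f (\<Phi> x, t) \<partial>Q t)"
      by (rule nn_integral_distr) measurable
  qed
  finally show ?thesis .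
qed

lemma nn_integral_rep_product:
  fixes f :: "'r \<times> (nat \<times> real) \<Rightarrow> ennreal"
  assumes M: "prob_space M"
    and K: "K \<in> measurable M (subprob_algebra X)"
    and \<Phi>: "\<Phi> \<in> measurable X R"
    and f: "f \<in> borel_measurable (R \<Otimes>\<^sub>M M)"
  shows "(\<integral>\<^sup>+v. f v \<partial>rep_product R M K \<Phi>) = (\<integral>\<^sup>+t. \<integral>\<^sup>+t'. \<integral>\<^sup>+x. f (\<Phi> x, t) \<partial>K t' \<partial>M \<partial>M)"
proof -
  interpret M: prob_space M by fact
  note [measurable] = \<Phi> K f
  have \<Phi>_bind: "\<Phi> \<in> measurable (M \<bind> K) R"
    by (subst measurable_cong_sets[OF sets_bind_measurable[OF K M.not_empty] refl]) (rule \<Phi>)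
  interpret MK: subprob_space "M \<bind> K"
    by (rule subprob_space_bind[OF M.subprob_space_axioms K])
  interpret D: finite_measure "distr (M \<bind> K) R \<Phi>"
    by (rule MK.finite_measure_distr[OF \<Phi>_bind])
  interpret DM: pair_sigma_finite "distr (M \<bind> K) R \<Phi>" M ..
  have "(\<integral>\<^sup>+v. f v \<partial>rep_product R M K \<Phi>) = (\<integral>\<^sup>+t. \<integral>\<^sup>+r. f (r, t) \<partial>distr (M \<bind> K) R \<Phi> \<partial>M)"
    unfolding rep_product_def
    by (rule DM.nn_integral_snd[symmetric])
       (simp cong: measurable_cong_sets sets_pair_measure_cong)
  also have "\<dots> = (\<integral>\<^sup>+t. \<integral>\<^sup>+t'. \<integral>\<^sup>+x. f (\<Phi> x, t) \<partial>K t' \<partial>M \<partial>M)"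
  proof (rule nn_integral_cong)
    fix t assume t: "t \<in> space M"
    have "(\<integral>\<^sup>+r. f (r, t) \<partial>distr (M \<bind> K) R \<Phi>) = (\<integral>\<^sup>+x. f (\<Phi> x, t) \<partial>(M \<bind> K))"
      by (rule nn_integral_distr[OF \<Phi>_bind]) (use t in measurable)
    also have "\<dots> = (\<integral>\<^sup>+t'. \<integral>\<^sup>+x. f (\<Phi> x, t) \<partial>K t' \<partial>M)"
      by (rule nn_integral_bind[OF _ K]) (use t in measurable)
    finally show "(\<integral>\<^sup>+r. f (r, t) \<partial>distr (M \<bind> K) R \<Phi>) = \<dots>" .
  qed
  finally show ?thesis .
qed

lemma counterfactual_loss_eq_enn2real_nn_integral:
  fixes M :: "(nat \<times> real) measure" and l :: "'x \<Rightarrow> nat \<Rightarrow> real \<Rightarrow> real"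
  assumes M: "prob_space M"
    and K: "K \<in> measurable M (subprob_algebra X)"
    and l: "(\<lambda>(x, t). l x (fst t) (snd t)) \<in> borel_measurable (X \<Otimes>\<^sub>M M)"
    and l_nonneg: "\<And>x t z. 0 \<le> l x t z"
    and fin: "(\<integral>\<^sup>+t. \<integral>\<^sup>+t'. \<integral>\<^sup>+x. l x (fst t) (snd t) \<partial>K t' \<partial>M \<partial>M) \<noteq> \<infinity>"
  shows "counterfactual_loss M K l = enn2real (\<integral>\<^sup>+t. \<integral>\<^sup>+t'. \<integral>\<^sup>+x. l x (fst t) (snd t) \<partial>K t' \<partial>M \<partial>M)"
proof -
  interpret M: prob_space M by fact
  note [measurable] = K l
  define N where "N t = (\<integral>\<^sup>+t'. \<integral>\<^sup>+x. l x (fst t) (snd t) \<partial>K t' \<partial>M)" for t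
  have K_snd: "(\<lambda>p. K (snd p)) \<in> measurable (M \<Otimes>\<^sub>M M) (subprob_algebra X)"
    by measurable
  have "(\<lambda>p. \<integral>\<^sup>+x. l x (fst (fst p)) (snd (fst p)) \<partial>K (snd p)) \<in> borel_measurable (M \<Otimes>\<^sub>M M)"
    by (rule nn_integral_measurable_subprob_algebra2[OF _ K_snd]) measurable
  then have N: "N \<in> borel_measurable M"
    unfolding N_def by (intro M.borel_measurable_nn_integral) (simp add: case_prod_beta')
  have "(\<lambda>p. \<integral>x. l x (fst (fst p)) (snd (fst p)) \<partial>K (snd p)) \<in> borel_measurable (M \<Otimes>\<^sub>M M)"
    by (rule integral_measurable_subprob_algebra2[OF _ K_snd]) measurable
  then have g: "(\<lambda>t. \<integral>t'. \<integral>x. l x (fst t) (snd t) \<partial>K t' \<partial>M) \<in> borel_measurable M"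
    by (intro M.borel_measurable_lebesgue_integral) (simp add: case_prod_beta')
  have "AE t in M. (\<integral>t'. \<integral>x. l x (fst t) (snd t) \<partial>K t' \<partial>M) = enn2real (N t)"
    using nn_integral_PInf_AE[OF N fin[folded N_def]] AE_space
  proof eventually_elim
    case (elim t)
    then show ?case
      unfolding N_def using l_nonneg
      by (intro integral_kernel_eq_enn2real_nn_integral[OF _ _ K]) measurable
  qed
  then show ?thesis
    unfolding counterfactual_loss_def N_def[symmetric]
    by (rule integral_eq_enn2real_nn_integral_AE[OF N fin[folded N_def] g])
qed

lemma counterfactual_loss_eq_integral_rep_product:
  fixes M :: "(nat \<times> real) measure" and l :: "'x \<Rightarrow> nat \<Rightarrow> real \<Rightarrow> real"
  assumes M: "prob_space M"
    and K: "K \<in> measurable M (subprob_algebra X)"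
    and \<Phi>: "\<Phi> \<in> measurable X R" and \<Psi>: "\<Psi> \<in> measurable R X"
    and \<Psi>_\<Phi>: "\<And>x. x \<in> space X \<Longrightarrow> \<Psi> (\<Phi> x) = x"
    and l: "(\<lambda>(x, t). l x (fst t) (snd t)) \<in> borel_measurable (X \<Otimes>\<^sub>M M)"
    and l_nonneg: "\<And>x t z. 0 \<le> l x t z"
    and int: "integrable (rep_product R M K \<Phi>) (\<lambda>(r, t). l (\<Psi> r) (fst t) (snd t))"
  shows "counterfactual_loss M K l
    = (\<integral>v. (case v of (r, t) \<Rightarrow> l (\<Psi> r) (fst t) (snd t)) \<partial>rep_product R M K \<Phi>)"
    (is "_ = integral\<^sup>L ?P ?f")
proof -
  note [measurable] = \<Phi> \<Psi> K l
  have "(\<integral>\<^sup>+v. ?f v \<partial>?P) = (\<integral>\<^sup>+t. \<integral>\<^sup>+t'. \<integral>\<^sup>+x. ?f (\<Phi> x, t) \<partial>K t' \<partial>M \<partial>M)"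
    by (rule nn_integral_rep_product[OF M K \<Phi>]) measurable
  also have "\<dots> = (\<integral>\<^sup>+t. \<integral>\<^sup>+t'. \<integral>\<^sup>+x. l x (fst t) (snd t) \<partial>K t' \<partial>M \<partial>M)"
    by (intro nn_integral_cong) (simp add: \<Psi>_\<Phi> sets_eq_imp_space_eq[OF sets_kernel[OF K]])
  finally have nn: "(\<integral>\<^sup>+v. ?f v \<partial>?P) = \<dots>" .
  have "integral\<^sup>L ?P ?f = enn2real (\<integral>\<^sup>+v. ?f v \<partial>?P)"
    using l_nonneg by (intro integral_eq_nn_integral)
      (auto simp: rep_product_def cong: measurable_cong_sets sets_pair_measure_cong)
  also have "\<dots> = counterfactual_loss M K l"
    unfolding nn using integrableD(2)[OF int] nn l_nonneg
    by (intro counterfactual_loss_eq_enn2real_nn_integral[symmetric, OF M K l]) auto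
  finally show ?thesis ..
qed

lemma factual_loss_eq_integral_bind:
  fixes M T :: "(nat \<times> real) measure" and l :: "'x \<Rightarrow> nat \<Rightarrow> real \<Rightarrow> real"
  assumes M: "space M \<noteq> {}" "sets M = sets T"
    and Q: "Q \<in> measurable T (subprob_algebra X)"
    and \<Phi>: "\<Phi> \<in> measurable X R" and \<Psi>: "\<Psi> \<in> measurable R X"
    and \<Psi>_\<Phi>: "\<And>x. x \<in> space X \<Longrightarrow> \<Psi> (\<Phi> x) = x"
    and l: "(\<lambda>(x, t). l x (fst t) (snd t)) \<in> borel_measurable (X \<Otimes>\<^sub>M T)"
    and l_nonneg: "\<And>x t z. 0 \<le> l x t z"
    and int: "integrable (M \<bind> (\<lambda>t. distr (Q t) (R \<Otimes>\<^sub>M T) (\<lambda>x. (\<Phi> x, t))))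
                (\<lambda>(r, t). l (\<Psi> r) (fst t) (snd t))"
  shows "factual_loss M Q l
    = (\<integral>v. (case v of (r, t) \<Rightarrow> l (\<Psi> r) (fst t) (snd t))
         \<partial>(M \<bind> (\<lambda>t. distr (Q t) (R \<Otimes>\<^sub>M T) (\<lambda>x. (\<Phi> x, t)))))"
    (is "_ = integral\<^sup>L ?P ?f")
proof -
  note [measurable] = \<Phi> \<Psi> Q l
  have Q_M: "Q \<in> measurable M (subprob_algebra X)"
    by (subst measurable_cong_sets[OF M(2) refl]) (rule Q)
  have "(\<integral>\<^sup>+v. ?f v \<partial>?P) = (\<integral>\<^sup>+t. \<integral>\<^sup>+x. ?f (\<Phi> x, t) \<partial>Q t \<partial>M)"
    by (rule nn_integral_bind_distr_Pair[OF M(2) Q \<Phi>]) measurable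
  also have "\<dots> = (\<integral>\<^sup>+t. \<integral>\<^sup>+x. l x (fst t) (snd t) \<partial>Q t \<partial>M)"
    by (intro nn_integral_cong) (simp add: \<Psi>_\<Phi> sets_eq_imp_space_eq[OF sets_kernel[OF Q_M]])
  finally have nn: "(\<integral>\<^sup>+v. ?f v \<partial>?P) = \<dots>" .
  have "(\<lambda>t. distr (Q t) (R \<Otimes>\<^sub>M T) (\<lambda>x. (\<Phi> x, t))) \<in> measurable M (subprob_algebra (R \<Otimes>\<^sub>M T))"
    by (subst measurable_cong_sets[OF M(2) refl]) (rule measurable_distr2[OF _ Q], measurable)
  then have "integral\<^sup>L ?P ?f = enn2real (\<integral>\<^sup>+v. ?f v \<partial>?P)"
    using M(1) by (intro integral_eq_nn_integral) (auto simp: l_nonneg cong: measurable_cong_sets)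
  also have "\<dots> = (\<integral>t. \<integral>x. l x (fst t) (snd t) \<partial>Q t \<partial>M)"
    unfolding nn using integrableD(2)[OF int] nn l_nonneg
    by (intro integral_kernel_eq_enn2real_nn_integral[symmetric, OF _ _ Q_M])
       (auto simp: M(2) cong: measurable_cong_sets)
  finally show ?thesis
    by (simp add: factual_loss_def)
qed

theorem lemma1:
  fixes X :: "'x measure" and R :: "'r measure" and Y :: "'y measure"
    and PTZ :: "(nat \<times> real) measure"
    and K :: "nat \<times> real \<Rightarrow> 'x measure"
    and PY :: "'x \<Rightarrow> nat \<times> real \<Rightarrow> 'y measure"
    and \<Phi> :: "'x \<Rightarrow> 'r" and \<Psi> :: "'r \<Rightarrow> 'x"
    and h :: "'r \<Rightarrow> nat \<Rightarrow> real \<Rightarrow> 'y"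
    and L :: "'y \<Rightarrow> 'y \<Rightarrow> real"
    and w :: "nat \<times> real \<Rightarrow> 'x \<Rightarrow> real"
    and G :: "('r \<times> (nat \<times> real) \<Rightarrow> real) set"
    and B :: real
  assumes PTZ: "prob_space PTZ" "sets PTZ = sets TZ"
    and K_prob: "\<And>tz. tz \<in> space TZ \<Longrightarrow> prob_space (K tz)"
    and K_sets: "\<And>tz. tz \<in> space TZ \<Longrightarrow> sets (K tz) = sets X"
    and K_meas: "K \<in> measurable TZ (subprob_algebra X)"
    and PY_prob: "\<And>x tz. x \<in> space X \<Longrightarrow> tz \<in> space TZ \<Longrightarrow> prob_space (PY x tz)"
    and PY_sets: "\<And>x tz. x \<in> space X \<Longrightarrow> tz \<in> space TZ \<Longrightarrow> sets (PY x tz) = sets Y"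
    and PY_meas: "(\<lambda>(x, tz). PY x tz) \<in> measurable (X \<Otimes>\<^sub>M TZ) (subprob_algebra Y)"
    and Phi_meas: "\<Phi> \<in> measurable X R"
    and Psi_meas: "\<Psi> \<in> measurable R X"
    and Psi_Phi: "\<And>x. x \<in> space X \<Longrightarrow> \<Psi> (\<Phi> x) = x"
    and Phi_Psi: "\<And>r. r \<in> space R \<Longrightarrow> \<Phi> (\<Psi> r) = r"
    and h_meas: "(\<lambda>(r, tz). h r (fst tz) (snd tz)) \<in> measurable (R \<Otimes>\<^sub>M TZ) Y"
    and L_nonneg: "\<And>y y'. L y y' \<ge> 0"
    and L_meas: "(\<lambda>(y, y'). L y y') \<in> borel_measurable (Y \<Otimes>\<^sub>M Y)"
    and w_pos: "\<And>tz x. w tz x > 0"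
    and w_meas: "(\<lambda>(tz, x). w tz x) \<in> borel_measurable (TZ \<Otimes>\<^sub>M X)"
    and w_int: "\<And>tz. tz \<in> space TZ \<Longrightarrow> integrable (K tz) (w tz)"
    and B_pos: "B > 0"
    and G_mem: "(\<lambda>(r, tz). exp_loss L h \<Phi> PY (\<Psi> r) (fst tz) (snd tz) / B) \<in> G"
    and int_P: "integrable (rep_product R PTZ K \<Phi>)
                  (\<lambda>(r, tz). exp_loss L h \<Phi> PY (\<Psi> r) (fst tz) (snd tz))"
    and int_Q: "integrable (rep_reweighted_joint R PTZ K w \<Phi>)
                  (\<lambda>(r, tz). exp_loss L h \<Phi> PY (\<Psi> r) (fst tz) (snd tz))"
  shows "ereal (counterfactual_loss PTZ K (exp_loss L h \<Phi> PY))
           \<le> ereal (factual_loss PTZ (reweighted K w) (exp_loss L h \<Phi> PY))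
             + ereal B * IPM G (rep_product R PTZ K \<Phi>) (rep_reweighted_joint R PTZ K w \<Phi>)"
proof -
  interpret PTZ: prob_space PTZ by (rule PTZ(1))
  have K_PTZ: "K \<in> measurable PTZ (subprob_algebra X)"
    by (subst measurable_cong_sets[OF PTZ(2) refl]) (rule K_meas)
  have loss_TZ: "(\<lambda>(x, tz). exp_loss L h \<Phi> PY x (fst tz) (snd tz)) \<in> borel_measurable (X \<Otimes>\<^sub>M TZ)"
    by (rule borel_measurable_exp_loss[OF PY_meas h_meas Phi_meas L_meas])
  then have loss_PTZ: "(\<lambda>(x, tz). exp_loss L h \<Phi> PY x (fst tz) (snd tz)) \<in> borel_measurable (X \<Otimes>\<^sub>M PTZ)"
    by (subst measurable_cong_sets[OF sets_pair_measure_cong[OF refl PTZ(2)] refl])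
  note loss_nonneg = exp_loss_nonneg[OF L_nonneg]
  have CF: "counterfactual_loss PTZ K (exp_loss L h \<Phi> PY)
      = (\<integral>v. (case v of (r, tz) \<Rightarrow> exp_loss L h \<Phi> PY (\<Psi> r) (fst tz) (snd tz)) \<partial>rep_product R PTZ K \<Phi>)"
    by (rule counterfactual_loss_eq_integral_rep_product[OF PTZ(1) K_PTZ Phi_meas Psi_meas Psi_Phi
          loss_PTZ loss_nonneg int_P])
  have reweighted: "reweighted K w \<in> measurable TZ (subprob_algebra X)"
    by (rule measurable_reweighted[OF K_meas K_prob w_meas w_pos w_int])
  have F: "factual_loss PTZ (reweighted K w) (exp_loss L h \<Phi> PY)
      = (\<integral>v. (case v of (r, tz) \<Rightarrow> exp_loss L h \<Phi> PY (\<Psi> r) (fst tz) (snd tz))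
           \<partial>rep_reweighted_joint R PTZ K w \<Phi>)"
    unfolding rep_reweighted_joint_def
    by (rule factual_loss_eq_integral_bind[OF PTZ.not_empty PTZ(2) reweighted Phi_meas Psi_meas Psi_Phi
          loss_TZ loss_nonneg int_Q[unfolded rep_reweighted_joint_def]])
  show ?thesis
    unfolding CF F using G_mem
    by (intro integral_le_integral_add_IPM[OF B_pos]) (simp add: case_prod_beta')
qed

end
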